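(* Let $\sigma:\mathbb{R}\to\mathbb{R}$ be an increasing odd homeomorphism. If $A\subset\mathbb{R}^2$ is invariant under $h_\sigma$ and $v_\sigma$ (i.e. $h_\sigma^{\pm1}(A)\subset A$ and $v_\sigma^{\pm1}(A)\subset A$), then $A_+=A\cap\mathbb{R}_{\geq0}^2$ satisfies $E_\sigma^{-1}(A_+)=A_+$.
   Context: $h_\sigma(x,y)=(x+\sigma^{-1}(y),y)$, $v_\sigma(x,y)=(x,\sigma(x)+y)$. The generalized Euclidean algorithm is $E_\sigma:\mathbb{R}_{\geq0}^2\to\mathbb{R}_{\geq0}^2$, $E_\sigma(x,y)=(x-\sigma^{-1}(y),y)$ if $y<\sigma(x)$ and $E_\sigma(x,y)=(x,y-\sigma(x))$ if $y\geq\sigma(x)$. *)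

theory Defs
  imports "HOL-Analysis.Analysis"
begin

definition h_map :: "(real \<Rightarrow> real) \<Rightarrow> real \<times> real \<Rightarrow> real \<times> real" where
  "h_map \<sigma> p = (fst p + inv \<sigma> (snd p), snd p)"

definition h_inv_map :: "(real \<Rightarrow> real) \<Rightarrow> real \<times> real \<Rightarrow> real \<times> real" where
  "h_inv_map \<sigma> p = (fst p - inv \<sigma> (snd p), snd p)"

definition v_map :: "(real \<Rightarrow> real) \<Rightarrow> real \<times> real \<Rightarrow> real \<times> real" where
  "v_map \<sigma> p = (fst p, \<sigma> (fst p) + snd p)"

definition v_inv_map :: "(real \<Rightarrow> real) \<Rightarrow> real \<times> real \<Rightarrow> real \<times> real" where
  "v_inv_map \<sigma> p = (fst p, snd p - \<sigma> (fst p))"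

definition nonneg_quadrant :: "(real \<times> real) set" where
  "nonneg_quadrant = {p. fst p \<ge> 0 \<and> snd p \<ge> 0}"

text \<open>Generalized Euclidean algorithm (meaningful on the nonnegative quadrant).\<close>
definition E_map :: "(real \<Rightarrow> real) \<Rightarrow> real \<times> real \<Rightarrow> real \<times> real" where
  "E_map \<sigma> p = (if snd p < \<sigma> (fst p) then (fst p - inv \<sigma> (snd p), snd p)
                 else (fst p, snd p - \<sigma> (fst p)))"

end

theory Submission
  imports Defs
begin

(* On the nonnegative quadrant E_\<sigma> is, pointwise, one of the two maps h_\<sigma>^-1 and v_\<sigma>^-1,
   and it is undone by the corresponding h_\<sigma> or v_\<sigma>. So invariance of A under h^-1, v^-1
   gives E(A) \<subseteq> A, invariance under h, v gives E^-1(A) \<subseteq> A, and monotonicity of \<sigma>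
   makes E map the quadrant into itself. *)

lemma E_map_cases:
  "E_map \<sigma> p = (if snd p < \<sigma> (fst p) then h_inv_map \<sigma> p else v_inv_map \<sigma> p)"
  by (simp add: E_map_def h_inv_map_def v_inv_map_def)

lemma h_map_h_inv_map [simp]: "h_map \<sigma> (h_inv_map \<sigma> p) = p"
  by (simp add: h_map_def h_inv_map_def)

lemma v_map_v_inv_map [simp]: "v_map \<sigma> (v_inv_map \<sigma> p) = p"
  by (simp add: v_map_def v_inv_map_def)

lemma E_map_mem_imp_mem:
  assumes "h_map \<sigma> ` A \<subseteq> A" and "v_map \<sigma> ` A \<subseteq> A" and "E_map \<sigma> p \<in> A"
  shows "p \<in> A"
proof (cases "snd p < \<sigma> (fst p)")
  case True
  then have "p = h_map \<sigma> (E_map \<sigma> p)" by (simp add: E_map_cases)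
  then show ?thesis using assms(1,3) by blast
next
  case False
  then have "p = v_map \<sigma> (E_map \<sigma> p)" by (simp add: E_map_cases)
  then show ?thesis using assms(2,3) by blast
qed

lemma mem_imp_E_map_mem:
  assumes "h_inv_map \<sigma> ` A \<subseteq> A" and "v_inv_map \<sigma> ` A \<subseteq> A" and "p \<in> A"
  shows "E_map \<sigma> p \<in> A"
  using assms by (auto simp: E_map_cases)

lemma E_map_nonneg_quadrant:
  assumes "strict_mono \<sigma>" and "surj \<sigma>" and "p \<in> nonneg_quadrant"
  shows "E_map \<sigma> p \<in> nonneg_quadrant"
proof (cases "snd p < \<sigma> (fst p)")
  case True
  then have "\<sigma> (inv \<sigma> (snd p)) < \<sigma> (fst p)" by (simp add: surj_f_inv_f assms(2))
  then have "inv \<sigma> (snd p) < fst p" using assms(1) strict_mono_less by blast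
  then show ?thesis using True assms(3) by (simp add: E_map_def nonneg_quadrant_def)
next
  case False
  then show ?thesis using assms(3) by (simp add: E_map_def nonneg_quadrant_def)
qed

theorem lemma9:
  fixes \<sigma> :: "real \<Rightarrow> real" and A :: "(real \<times> real) set"
  assumes "strict_mono \<sigma>"
    and "\<And>x. \<sigma> (- x) = - \<sigma> x"
    and "homeomorphism UNIV UNIV \<sigma> (inv \<sigma>)"
    and "h_map \<sigma> ` A \<subseteq> A" and "h_inv_map \<sigma> ` A \<subseteq> A"
    and "v_map \<sigma> ` A \<subseteq> A" and "v_inv_map \<sigma> ` A \<subseteq> A"
  shows "{p \<in> nonneg_quadrant. E_map \<sigma> p \<in> A \<inter> nonneg_quadrant} = A \<inter> nonneg_quadrant"
proof -
  have "surj \<sigma>" using assms(3) by (simp add: homeomorphism_def)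
  then show ?thesis
    using E_map_mem_imp_mem[OF assms(4,6)] mem_imp_E_map_mem[OF assms(5,7)]
      E_map_nonneg_quadrant[OF assms(1)]
    by blast
qed

end
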